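(* Let $\mathcal{V}$ be a quaternionic two-sided Banach algebra with unit $1\neq0$, let $a\in\mathcal{V}$ and $q\in\partial\sigma_S(a)$. Then there exists a sequence $(b_n)$ of elements of $\mathcal{V}$ with $\|b_n\|=1$ and $$\lim_{n}(a^{2}-2Re(q)a+|q|^{2}1_{\mathcal{V}})b_{n}=\lim_{n}b_{n}(a^{2}-2Re(q)a+|q|^{2}1_{\mathcal{V}})=0.$$
   Context: $\mathbb{H}$ denotes the quaternions, $Re(q)$ the real part and $|q|$ the norm of $q$. A quaternionic two-sided Banach algebra with unit is a two-sided $\mathbb{H}$-vector space $\mathcal{V}$ with an associative product satisfying $x(y+z)=xy+xz$, $(x+y)z=xz+yz$, $q(xy)=(qx)y$, $(xy)q=x(yq)$, complete for a norm with $\|qx\|=|q|\|x\|=\|xq\|$, $\|xy\|\le\|x\|\|y\|$, with unit $1_{\mathcal{V}}$, $\|1_{\mathcal{V}}\|=1$. $\mathcal{V}^{-1}$ is the set of invertible elements. The S-spectrum of $a$ is $\sigma_S(a)=\{q\in\mathbb{H}: a^2-2Re(q)a+|q|^21_{\mathcal{V}}\notin\mathcal{V}^{-1}\}$, and $\partial\sigma_S(a)$ is its boundary in $\mathbb{H}$. *)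

theory Defs
  imports "HOL-Analysis.Analysis"
begin

datatype quat = Quat (qRe: real) (qI: real) (qJ: real) (qK: real)

definition qadd :: "quat \<Rightarrow> quat \<Rightarrow> quat" where
  "qadd p q = Quat (qRe p + qRe q) (qI p + qI q) (qJ p + qJ q) (qK p + qK q)"

definition qmult :: "quat \<Rightarrow> quat \<Rightarrow> quat" where
  "qmult p q = Quat
     (qRe p * qRe q - qI p * qI q - qJ p * qJ q - qK p * qK q)
     (qRe p * qI q + qI p * qRe q + qJ p * qK q - qK p * qJ q)
     (qRe p * qJ q - qI p * qK q + qJ p * qRe q + qK p * qI q)
     (qRe p * qK q + qI p * qJ q - qJ p * qI q + qK p * qRe q)"

definition qdiff :: "quat \<Rightarrow> quat \<Rightarrow> quat" where
  "qdiff p q = Quat (qRe p - qRe q) (qI p - qI q) (qJ p - qJ q) (qK p - qK q)"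

definition qof_real :: "real \<Rightarrow> quat" where
  "qof_real r = Quat r 0 0 0"

definition qnorm :: "quat \<Rightarrow> real" where
  "qnorm q = sqrt ((qRe q)\<^sup>2 + (qI q)\<^sup>2 + (qJ q)\<^sup>2 + (qK q)\<^sup>2)"

definition qboundary :: "quat set \<Rightarrow> quat set" where
  "qboundary S = {q. \<forall>e>0. (\<exists>p\<in>S. qnorm (qdiff p q) < e) \<and> (\<exists>p. p \<notin> S \<and> qnorm (qdiff p q) < e)}"

text \<open>The carrier type is a real Banach algebra with unit of norm 1 (this encodes
  completeness, associativity, distributivity, submultiplicativity of the norm and
  the norm of the unit).\<close>

definition quat_two_sided_banach_algebra ::
  "(quat \<Rightarrow> 'v::{real_normed_algebra_1,banach} \<Rightarrow> 'v) \<Rightarrow> ('v \<Rightarrow> quat \<Rightarrow> 'v) \<Rightarrow> bool" where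
  "quat_two_sided_banach_algebra lsc rsc \<longleftrightarrow>
     (\<forall>q x y. lsc q (x + y) = lsc q x + lsc q y) \<and>
     (\<forall>p q x. lsc (qadd p q) x = lsc p x + lsc q x) \<and>
     (\<forall>p q x. lsc (qmult p q) x = lsc p (lsc q x)) \<and>
     (\<forall>q x y. rsc (x + y) q = rsc x q + rsc y q) \<and>
     (\<forall>p q x. rsc x (qadd p q) = rsc x p + rsc x q) \<and>
     (\<forall>p q x. rsc x (qmult p q) = rsc (rsc x p) q) \<and>
     (\<forall>p q x. rsc (lsc p x) q = lsc p (rsc x q)) \<and>
     (\<forall>r x. lsc (qof_real r) x = scaleR r x \<and> rsc x (qof_real r) = scaleR r x) \<and>
     (\<forall>q x y. lsc q (x * y) = lsc q x * y) \<and>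
     (\<forall>q x y. rsc (x * y) q = x * rsc y q) \<and>
     (\<forall>q x. norm (lsc q x) = qnorm q * norm x \<and> norm (rsc x q) = qnorm q * norm x)"

definition S_spectrum :: "'v::real_normed_algebra_1 \<Rightarrow> quat set" where
  "S_spectrum a = {q. \<not> (\<exists>y. y * (a\<^sup>2 - scaleR (2 * qRe q) a + scaleR ((qnorm q)\<^sup>2) 1) = 1 \<and>
                                 (a\<^sup>2 - scaleR (2 * qRe q) a + scaleR ((qnorm q)\<^sup>2) 1) * y = 1)}"

end

theory Submission
  imports Defs
begin

text \<open>Write Q(q) = a^2 - 2 Re(q) a + |q|^2 1, which depends
  continuously on q. Since the invertible elements form an open set, a boundary point q
  of the S-spectrum, being a limit of spectral points, has Q(q) non-invertible; being
  also a limit of non-spectral points, Q(q) is a limit of invertible elements x_n.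
  The perturbation bound for inverses gives |x_n^-1| >= 1 / |Q(q) - x_n|, so the
  normalised inverses b_n = x_n^-1 / |x_n^-1| satisfy Q(q) b_n -> 0 and b_n Q(q) -> 0.\<close>

definition invertible_elem :: "'a::monoid_mult \<Rightarrow> bool" where
  "invertible_elem x \<longleftrightarrow> (\<exists>y. y * x = 1 \<and> x * y = 1)"

definition topological_zero_divisor :: "'a::real_normed_algebra \<Rightarrow> bool" where
  "topological_zero_divisor x \<longleftrightarrow>
     (\<exists>b. (\<forall>n. norm (b n) = 1) \<and> (\<lambda>n. x * b n) \<longlonglongrightarrow> 0 \<and> (\<lambda>n. b n * x) \<longlonglongrightarrow> 0)"

lemma invertible_elem_one_minus:
  fixes u :: "'a::{real_normed_algebra_1,banach}"
  assumes "norm u < 1"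
  shows "invertible_elem (1 - u)"
proof -
  define w where "w = (\<Sum>n. u ^ n)"
  have geometric: "(\<lambda>n. u ^ n) sums w"
    unfolding w_def by (rule summable_sums[OF complete_algebra_summable_geometric[OF assms]])
  have telescope: "(\<lambda>n. u ^ n - u ^ Suc n) sums 1"
    using telescope_sums'[OF LIMSEQ_power_zero[OF assms]] by simp
  have "(\<lambda>n. u ^ n * (1 - u)) = (\<lambda>n. u ^ n - u ^ Suc n)"
    by (simp add: algebra_simps power_commutes)
  then have "w * (1 - u) = 1"
    using sums_mult2[OF geometric, of "1 - u"] telescope by (metis sums_unique2)
  moreover have "(\<lambda>n. (1 - u) * u ^ n) = (\<lambda>n. u ^ n - u ^ Suc n)"
    by (simp add: algebra_simps)
  then have "(1 - u) * w = 1"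
    using sums_mult[OF geometric, of "1 - u"] telescope by (metis sums_unique2)
  ultimately show ?thesis
    unfolding invertible_elem_def by blast
qed

lemma invertible_elem_near_invertible:
  fixes x y z :: "'a::{real_normed_algebra_1,banach}"
  assumes yx: "y * x = 1" and xy: "x * y = 1" and near: "norm (z - x) * norm y < 1"
  shows "invertible_elem z"
proof -
  define u where "u = y * (x - z)"
  have "norm u \<le> norm (z - x) * norm y"
    unfolding u_def using norm_mult_ineq[of y "x - z"] by (simp add: norm_minus_commute mult.commute)
  then obtain w where w1: "w * (1 - u) = 1" and w2: "(1 - u) * w = 1"
    using invertible_elem_one_minus[of u] near unfolding invertible_elem_def by auto
  have z: "z = x * (1 - u)"
    unfolding u_def by (simp add: algebra_simps xy mult.assoc[symmetric])
  have "z * (w * y) = x * ((1 - u) * w) * y"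
    unfolding z by (simp add: mult.assoc)
  then have "z * (w * y) = 1"
    using w2 xy by simp
  moreover have "(w * y) * z = w * (y * x) * (1 - u)"
    unfolding z by (simp add: mult.assoc)
  then have "(w * y) * z = 1"
    using w1 yx by simp
  ultimately show ?thesis
    unfolding invertible_elem_def by blast
qed

lemma not_invertible_elem_limit:
  fixes x :: "'a::{real_normed_algebra_1,banach}"
  assumes not_inv: "\<And>n. \<not> invertible_elem (xs n)" and lim: "xs \<longlonglongrightarrow> x"
  shows "\<not> invertible_elem x"
proof
  assume "invertible_elem x"
  then obtain y where yx: "y * x = 1" and xy: "x * y = 1"
    unfolding invertible_elem_def by blast
  have "(\<lambda>n. norm (xs n - x) * norm y) \<longlonglongrightarrow> 0 * norm y"
    using lim by (intro tendsto_intros) (simp add: LIM_zero tendsto_norm_zero)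
  then have "\<forall>\<^sub>F n in sequentially. norm (xs n - x) * norm y < 1"
    by (simp add: order_tendstoD(2))
  then obtain n where "norm (xs n - x) * norm y < 1"
    by (auto simp: eventually_sequentially)
  then show False
    using invertible_elem_near_invertible[OF yx xy] not_inv by blast
qed

lemma norm_mult_normalized_right_inverse_le:
  fixes x x' y :: "'a::real_normed_algebra_1"
  assumes "x' * y = 1" and "y \<noteq> 0"
  shows "norm (x * scaleR (inverse (norm y)) y) \<le> norm (x - x') + inverse (norm y)"
proof -
  have "x * y = (x - x') * y + 1"
    using assms(1) by (simp add: algebra_simps)
  then have "norm (x * y) \<le> norm (x - x') * norm y + 1"
    by (metis add_mono norm_mult_ineq norm_one norm_triangle_le order_refl)
  then have "inverse (norm y) * norm (x * y) \<le> inverse (norm y) * (norm (x - x') * norm y + 1)"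
    by (simp add: mult_left_mono)
  with assms(2) show ?thesis
    by (simp add: field_simps)
qed

lemma norm_mult_normalized_left_inverse_le:
  fixes x x' y :: "'a::real_normed_algebra_1"
  assumes "y * x' = 1" and "y \<noteq> 0"
  shows "norm (scaleR (inverse (norm y)) y * x) \<le> norm (x - x') + inverse (norm y)"
proof -
  have "y * x = y * (x - x') + 1"
    using assms(1) by (simp add: algebra_simps)
  then have "norm (y * x) \<le> norm (x - x') * norm y + 1"
    by (metis add_mono mult.commute norm_mult_ineq norm_one norm_triangle_le order_refl)
  then have "inverse (norm y) * norm (y * x) \<le> inverse (norm y) * (norm (x - x') * norm y + 1)"
    by (simp add: mult_left_mono)
  with assms(2) show ?thesis
    by (simp add: field_simps)
qed

lemma topological_zero_divisor_limit_of_invertibles: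
  fixes x :: "'a::{real_normed_algebra_1,banach}"
  assumes nontrivial: "(1::'a) \<noteq> 0"
    and inv: "\<And>n. invertible_elem (xs n)" and not_inv: "\<not> invertible_elem x"
    and lim: "xs \<longlonglongrightarrow> x"
  shows "topological_zero_divisor x"
proof -
  obtain ys where ys_xs: "\<And>n. ys n * xs n = 1" and xs_ys: "\<And>n. xs n * ys n = 1"
    using inv unfolding invertible_elem_def by metis
  have ys_nonzero: "ys n \<noteq> 0" for n
    using ys_xs[of n] nontrivial by auto
  define d where "d n = norm (x - xs n)" for n
  have d: "d \<longlonglongrightarrow> 0"
    unfolding d_def using tendsto_norm_zero[OF LIM_zero[OF lim]] by (simp add: norm_minus_commute)
  have "inverse (norm (ys n)) \<le> d n" for n
  proof -
    have "1 \<le> d n * norm (ys n)"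
      unfolding d_def using invertible_elem_near_invertible[OF ys_xs xs_ys] not_inv not_le by blast
    with ys_nonzero[of n] show ?thesis
      by (simp add: field_simps)
  qed
  then have "(\<lambda>n. inverse (norm (ys n))) \<longlonglongrightarrow> 0"
    by (intro Lim_null_comparison[OF always_eventually d]) simp
  with d have bound: "(\<lambda>n. d n + inverse (norm (ys n))) \<longlonglongrightarrow> 0"
    by (rule tendsto_add_zero)
  define b where "b n = scaleR (inverse (norm (ys n))) (ys n)" for n
  have "norm (b n) = 1" for n
    unfolding b_def using ys_nonzero[of n] by simp
  moreover have "(\<lambda>n. x * b n) \<longlonglongrightarrow> 0"
    unfolding b_def d_def
    by (rule Lim_null_comparison[OF always_eventually bound[unfolded d_def]])
       (use norm_mult_normalized_right_inverse_le[OF xs_ys ys_nonzero] in blast)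
  moreover have "(\<lambda>n. b n * x) \<longlonglongrightarrow> 0"
    unfolding b_def d_def
    by (rule Lim_null_comparison[OF always_eventually bound[unfolded d_def]])
       (use norm_mult_normalized_left_inverse_le[OF ys_xs ys_nonzero] in blast)
  ultimately show ?thesis
    unfolding topological_zero_divisor_def by blast
qed

lemma abs_quat_components_le_qnorm_qdiff:
  "\<bar>qRe p - qRe q\<bar> \<le> qnorm (qdiff p q)" "\<bar>qI p - qI q\<bar> \<le> qnorm (qdiff p q)"
  "\<bar>qJ p - qJ q\<bar> \<le> qnorm (qdiff p q)" "\<bar>qK p - qK q\<bar> \<le> qnorm (qdiff p q)"
  unfolding qnorm_def qdiff_def by (auto intro!: real_le_rsqrt)

lemma tendsto_quat_components:
  assumes lim: "(\<lambda>n. qnorm (qdiff (p n) q)) \<longlonglongrightarrow> 0"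
  shows "(\<lambda>n. qRe (p n)) \<longlonglongrightarrow> qRe q" "(\<lambda>n. qI (p n)) \<longlonglongrightarrow> qI q"
    "(\<lambda>n. qJ (p n)) \<longlonglongrightarrow> qJ q" "(\<lambda>n. qK (p n)) \<longlonglongrightarrow> qK q"
proof -
  have dominated: "f \<longlonglongrightarrow> c" if "\<And>n. \<bar>f n - c\<bar> \<le> qnorm (qdiff (p n) q)" for f c
  proof -
    have "(\<lambda>n. f n - c) \<longlonglongrightarrow> 0"
      using that by (intro Lim_null_comparison[OF always_eventually lim]) simp
    then show ?thesis
      by (simp add: LIM_zero_iff)
  qed
  show "(\<lambda>n. qRe (p n)) \<longlonglongrightarrow> qRe q" "(\<lambda>n. qI (p n)) \<longlonglongrightarrow> qI q"
    "(\<lambda>n. qJ (p n)) \<longlonglongrightarrow> qJ q" "(\<lambda>n. qK (p n)) \<longlonglongrightarrow> qK q"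
    by (rule dominated, rule abs_quat_components_le_qnorm_qdiff)+
qed

definition S_quadratic :: "'a::real_normed_algebra_1 \<Rightarrow> quat \<Rightarrow> 'a" where
  "S_quadratic a q = a\<^sup>2 - scaleR (2 * qRe q) a + scaleR ((qnorm q)\<^sup>2) 1"

lemma S_spectrum_iff: "q \<in> S_spectrum a \<longleftrightarrow> \<not> invertible_elem (S_quadratic a q)"
  unfolding S_spectrum_def S_quadratic_def invertible_elem_def by auto

lemma tendsto_S_quadratic:
  assumes "(\<lambda>n. qnorm (qdiff (p n) q)) \<longlonglongrightarrow> 0"
  shows "(\<lambda>n. S_quadratic a (p n)) \<longlonglongrightarrow> S_quadratic a q"
proof -
  have qnorm_sq: "(qnorm p)\<^sup>2 = (qRe p)\<^sup>2 + (qI p)\<^sup>2 + (qJ p)\<^sup>2 + (qK p)\<^sup>2" for p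
    unfolding qnorm_def by simp
  show ?thesis
    unfolding S_quadratic_def qnorm_sq using tendsto_quat_components[OF assms] by (intro tendsto_intros)
qed

lemma quat_sequence_approaching:
  assumes "\<And>e. e > 0 \<Longrightarrow> \<exists>p\<in>T. qnorm (qdiff p q) < e"
  obtains p where "\<And>n. p n \<in> T" and "(\<lambda>n. qnorm (qdiff (p n) q)) \<longlonglongrightarrow> 0"
proof -
  have "\<forall>n. \<exists>p\<in>T. qnorm (qdiff p q) < inverse (real (Suc n))"
    using assms by simp
  then obtain p where p_in: "\<And>n. p n \<in> T"
      and p_near: "\<And>n. qnorm (qdiff (p n) q) < inverse (real (Suc n))"
    by metis
  have "(\<lambda>n. qnorm (qdiff (p n) q)) \<longlonglongrightarrow> 0"
    using p_near by (intro Lim_null_comparison[OF always_eventually LIMSEQ_inverse_real_of_nat])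
      (auto simp: qnorm_def less_imp_le)
  with p_in show ?thesis
    by (rule that)
qed

lemma qboundary_limits:
  assumes "q \<in> qboundary S"
  obtains p p' where "\<And>n. p n \<in> S" "(\<lambda>n. qnorm (qdiff (p n) q)) \<longlonglongrightarrow> 0"
    and "\<And>n. p' n \<notin> S" "(\<lambda>n. qnorm (qdiff (p' n) q)) \<longlonglongrightarrow> 0"
proof -
  obtain p where "\<And>n. p n \<in> S" "(\<lambda>n. qnorm (qdiff (p n) q)) \<longlonglongrightarrow> 0"
    by (rule quat_sequence_approaching[of S q]) (use assms in \<open>auto simp: qboundary_def\<close>)
  moreover obtain p' where "\<And>n. p' n \<in> -S" "(\<lambda>n. qnorm (qdiff (p' n) q)) \<longlonglongrightarrow> 0"
    by (rule quat_sequence_approaching[of "-S" q]) (use assms in \<open>auto simp: qboundary_def\<close>)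
  ultimately show ?thesis
    using that by blast
qed

theorem mainTheorem5:
  fixes lsc :: "quat \<Rightarrow> 'v::{real_normed_algebra_1,banach} \<Rightarrow> 'v"
    and rsc :: "'v \<Rightarrow> quat \<Rightarrow> 'v"
    and a :: 'v and q :: quat
  assumes "quat_two_sided_banach_algebra lsc rsc"
    and "(1::'v) \<noteq> 0"
    and "q \<in> qboundary (S_spectrum a)"
  shows "\<exists>b :: nat \<Rightarrow> 'v. (\<forall>n. norm (b n) = 1) \<and>
     (\<lambda>n. (a\<^sup>2 - scaleR (2 * qRe q) a + scaleR ((qnorm q)\<^sup>2) 1) * b n) \<longlonglongrightarrow> 0 \<and>
     (\<lambda>n. b n * (a\<^sup>2 - scaleR (2 * qRe q) a + scaleR ((qnorm q)\<^sup>2) 1)) \<longlonglongrightarrow> 0"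
proof -
  obtain p p' where spectral: "\<And>n. p n \<in> S_spectrum a"
      and p_lim: "(\<lambda>n. qnorm (qdiff (p n) q)) \<longlonglongrightarrow> 0"
      and non_spectral: "\<And>n. p' n \<notin> S_spectrum a"
      and p'_lim: "(\<lambda>n. qnorm (qdiff (p' n) q)) \<longlonglongrightarrow> 0"
    using qboundary_limits[OF assms(3)] by blast
  have "\<not> invertible_elem (S_quadratic a q)"
    using not_invertible_elem_limit[OF _ tendsto_S_quadratic[where a = a, OF p_lim]] spectral
    by (simp add: S_spectrum_iff)
  moreover have "invertible_elem (S_quadratic a (p' n))" for n
    using non_spectral[of n] by (simp add: S_spectrum_iff)
  ultimately have "topological_zero_divisor (S_quadratic a q)"
    using topological_zero_divisor_limit_of_invertibles[OF assms(2) _ _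
        tendsto_S_quadratic[where a = a, OF p'_lim]]
    by blast
  then show ?thesis
    unfolding topological_zero_divisor_def S_quadratic_def .
qed

end
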